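(* Let $R$ be a power-serieswise Armendariz ring. Then the power series ring $R[[x]]$ is a generalized right quasi-Baer ring if and only if $R$ is a generalized right quasi-Baer ring.
   Context: All rings are associative with identity. For a nonempty subset $X$ of a ring $R$, $r_R(X)=\{a\in R : xa=0 \text{ for all } x\in X\}$, and for a positive integer $n$, $X^n$ denotes the set of all products $a_1\cdots a_n$ with $a_i\in X$. A ring $R$ is generalized right quasi-Baer if for every right ideal $I$ of $R$ there exist a positive integer $n$ (depending on $I$) and an idempotent $e\in R$ with $r_R(I^n)=eR$. A ring $R$ is power-serieswise Armendariz if whenever $f(x)=\sum_{i\ge0}a_ix^i$ and $g(x)=\sum_{j\ge0}b_jx^j$ in $R[[x]]$ satisfy $f(x)g(x)=0$, then $a_ib_j=0$ for all $i,j$. *)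

theory Defs
  imports "HOL-Computational_Algebra.Formal_Power_Series"
begin

definition right_ann :: "'a::ring_1 set \<Rightarrow> 'a set" where
  "right_ann X = {a. \<forall>x\<in>X. x * a = 0}"

definition set_power :: "'a::ring_1 set \<Rightarrow> nat \<Rightarrow> 'a set" where
  "set_power X n = {prod_list xs | xs. length xs = n \<and> set xs \<subseteq> X}"

definition right_ideal :: "'a::ring_1 set \<Rightarrow> bool" where
  "right_ideal I \<longleftrightarrow> 0 \<in> I \<and> (\<forall>a\<in>I. \<forall>b\<in>I. a + b \<in> I) \<and> (\<forall>a\<in>I. - a \<in> I)
     \<and> (\<forall>a\<in>I. \<forall>r. a * r \<in> I)"

definition gen_right_quasi_Baer :: "'a::ring_1 itself \<Rightarrow> bool" where
  "gen_right_quasi_Baer _ \<longleftrightarrow>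
     (\<forall>I::'a set. right_ideal I \<longrightarrow>
        (\<exists>n::nat. n > 0 \<and> (\<exists>e::'a. e * e = e \<and> right_ann (set_power I n) = {e * r | r. True})))"

definition ps_Armendariz :: "'a::ring_1 itself \<Rightarrow> bool" where
  "ps_Armendariz _ \<longleftrightarrow>
     (\<forall>f g :: 'a fps. f * g = 0 \<longrightarrow> (\<forall>i j. fps_nth f i * fps_nth g j = 0))"

end

theory Submission
  imports Defs
begin

text \<open>For a right ideal \<open>J\<close> of \<open>R[[x]]\<close> let \<open>C(J)\<close> be the set of all coefficients of members
  of \<open>J\<close>. Iterating the Armendariz property over products of \<open>n\<close> series shows that a series \<open>g\<close>
  annihilates \<open>J\<^sup>n\<close> exactly when every coefficient of \<open>g\<close> annihilates \<open>C(J)\<^sup>n\<close>. Hence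
  \<open>r(J\<^sup>n) = eR[[x]]\<close> when \<open>r(C(J)\<^sup>n) = eR\<close>, and conversely, for a right ideal \<open>I\<close> of \<open>R\<close>,
  applying this to \<open>J = I[[x]]\<close> (for which \<open>C(J) = I\<close>) and taking constant terms turns
  \<open>r(J\<^sup>n) = E R[[x]]\<close> into \<open>r(I\<^sup>n) = E\<^sub>0 R\<close>.\<close>

definition fps_coeff_set :: "'a::ring_1 fps set \<Rightarrow> 'a set" where
  "fps_coeff_set J = (\<Union>f\<in>J. range (fps_nth f))"

definition fps_with_coeffs_in :: "'a::ring_1 set \<Rightarrow> 'a fps set" where
  "fps_with_coeffs_in I = {f. \<forall>i. fps_nth f i \<in> I}"

lemma right_ideal_right_ann: "right_ideal (right_ann X)"
  unfolding right_ideal_def right_ann_def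
  by (auto simp: distrib_left mult.assoc[symmetric])

lemma right_ideal_sum:
  assumes "right_ideal I" "\<And>i. i \<in> S \<Longrightarrow> h i \<in> I"
  shows "sum h S \<in> I"
  using assms(2)
  by (induction S rule: infinite_finite_induct) (use assms(1) in \<open>auto simp: right_ideal_def\<close>)

lemma right_ideal_fps_with_coeffs_in:
  assumes I: "right_ideal I"
  shows "right_ideal (fps_with_coeffs_in I)"
proof -
  have "fps_nth (f * g) k \<in> I" if "\<forall>i. fps_nth f i \<in> I" for f g :: "'a fps" and k
    unfolding fps_mult_nth using I that by (intro right_ideal_sum) (auto simp: right_ideal_def)
  then show ?thesis
    using I by (auto simp: right_ideal_def fps_with_coeffs_in_def)
qed

lemma fps_coeff_set_fps_with_coeffs_in:
  assumes "0 \<in> I"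
  shows "fps_coeff_set (fps_with_coeffs_in I) = I"
proof -
  have "fps_const a \<in> fps_with_coeffs_in I" if "a \<in> I" for a
    using assms that by (simp add: fps_with_coeffs_in_def)
  moreover have "a = fps_nth (fps_const a) 0" for a :: 'a
    by simp
  ultimately have "a \<in> fps_coeff_set (fps_with_coeffs_in I)" if "a \<in> I" for a
    unfolding fps_coeff_set_def using that by blast
  then show ?thesis
    unfolding fps_coeff_set_def by (auto simp: fps_with_coeffs_in_def)
qed

lemma right_ideal_fps_coeff_set:
  assumes J: "right_ideal J"
  shows "right_ideal (fps_coeff_set J)"
  unfolding right_ideal_def
proof (intro conjI ballI allI)
  show "0 \<in> fps_coeff_set J"
    using J by (force simp: right_ideal_def fps_coeff_set_def)
next
  fix a b assume "a \<in> fps_coeff_set J" "b \<in> fps_coeff_set J"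
  then obtain f i g j where f: "f \<in> J" "a = fps_nth f i" and g: "g \<in> J" "b = fps_nth g j"
    by (auto simp: fps_coeff_set_def)
  \<comment> \<open>shifting both series aligns the two coefficients at degree \<open>i + j\<close>\<close>
  have "f * fps_X ^ j + g * fps_X ^ i \<in> J"
    using J f g by (simp add: right_ideal_def)
  moreover have "fps_nth (f * fps_X ^ j + g * fps_X ^ i) (i + j) = a + b"
    using f g by (simp add: fps_X_power_mult_right_nth)
  ultimately show "a + b \<in> fps_coeff_set J"
    unfolding fps_coeff_set_def by (metis UN_iff rangeI)
next
  fix a assume "a \<in> fps_coeff_set J"
  then obtain f i where "f \<in> J" "a = fps_nth f i" by (auto simp: fps_coeff_set_def)
  moreover have "- f \<in> J" using J \<open>f \<in> J\<close> by (simp add: right_ideal_def)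
  ultimately show "- a \<in> fps_coeff_set J"
    unfolding fps_coeff_set_def by (metis UN_iff fps_neg_nth rangeI)
next
  fix a r assume "a \<in> fps_coeff_set J"
  then obtain f i where "f \<in> J" "a = fps_nth f i" by (auto simp: fps_coeff_set_def)
  moreover have "f * fps_const r \<in> J" using J \<open>f \<in> J\<close> by (simp add: right_ideal_def)
  ultimately show "a * r \<in> fps_coeff_set J"
    unfolding fps_coeff_set_def by (metis UN_iff fps_mult_right_const_nth rangeI)
qed

lemma fps_const_mult_eq_0_iff:
  "fps_const c * (g :: 'a::ring_1 fps) = 0 \<longleftrightarrow> (\<forall>j. c * fps_nth g j = 0)"
  by (auto simp: fps_eq_iff)

lemma ps_Armendariz_mult_eq_0_iff:
  assumes "ps_Armendariz TYPE('a::ring_1)"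
  shows "fps_const c * f * h = 0 \<longleftrightarrow> (\<forall>i. fps_const (c * fps_nth f i) * (h :: 'a fps) = 0)"
proof
  assume "fps_const c * f * h = 0"
  then have "fps_nth (fps_const c * f) i * fps_nth h j = 0" for i j
    using assms unfolding ps_Armendariz_def by blast
  then show "\<forall>i. fps_const (c * fps_nth f i) * h = 0"
    by (simp add: fps_const_mult_eq_0_iff mult.assoc)
next
  assume "\<forall>i. fps_const (c * fps_nth f i) * h = 0"
  then have "c * fps_nth f i * fps_nth h j = 0" for i j
    by (simp add: fps_const_mult_eq_0_iff)
  then have "fps_nth (fps_const c * f * h) k = 0" for k
    unfolding fps_mult_nth[of "fps_const c * f"] fps_mult_left_const_nth by simp
  then show "fps_const c * f * h = 0" by (simp add: fps_eq_iff)
qed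

lemma ps_Armendariz_prod_list_eq_0_iff:
  assumes "ps_Armendariz TYPE('a::ring_1)"
  shows "fps_const c * prod_list fs * (g :: 'a fps) = 0 \<longleftrightarrow>
    (\<forall>as j. list_all2 (\<lambda>a f. a \<in> range (fps_nth f)) as fs \<longrightarrow> c * prod_list as * fps_nth g j = 0)"
proof (induction fs arbitrary: c)
  case Nil
  show ?case by (simp add: fps_const_mult_eq_0_iff)
next
  case (Cons f fs)
  have "fps_const c * prod_list (f # fs) * g = 0 \<longleftrightarrow>
      (\<forall>i. fps_const (c * fps_nth f i) * prod_list fs * g = 0)"
    using ps_Armendariz_mult_eq_0_iff[OF assms, of c f "prod_list fs * g"]
    by (simp add: mult.assoc)
  also have "\<dots> \<longleftrightarrow> (\<forall>i as j. list_all2 (\<lambda>a f. a \<in> range (fps_nth f)) as fs \<longrightarrow>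
      c * fps_nth f i * prod_list as * fps_nth g j = 0)"
    by (simp add: Cons.IH)
  also have "\<dots> \<longleftrightarrow> (\<forall>as j. list_all2 (\<lambda>a f. a \<in> range (fps_nth f)) as (f # fs) \<longrightarrow>
      c * prod_list as * fps_nth g j = 0)"
    by (fastforce simp: list_all2_Cons2 mult.assoc)
  finally show ?case .
qed

lemma subset_fps_coeff_set_iff:
  "set as \<subseteq> fps_coeff_set J \<longleftrightarrow>
    (\<exists>fs. list_all2 (\<lambda>a f. a \<in> range (fps_nth f)) as fs \<and> set fs \<subseteq> J)"
proof (induction as)
  case Nil
  show ?case by simp
next
  case (Cons a as)
  have "set (a # as) \<subseteq> fps_coeff_set J \<longleftrightarrow>
      (\<exists>f\<in>J. a \<in> range (fps_nth f)) \<and> set as \<subseteq> fps_coeff_set J"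
    by (simp add: fps_coeff_set_def)
  then show ?case
    unfolding Cons.IH list_all2_Cons1 by fastforce
qed

lemma set_power_iff: "x \<in> set_power X n \<longleftrightarrow> (\<exists>xs. x = prod_list xs \<and> length xs = n \<and> set xs \<subseteq> X)"
  by (auto simp: set_power_def)

theorem right_ann_set_power_fps:
  assumes "ps_Armendariz TYPE('a::ring_1)"
  shows "right_ann (set_power (J :: 'a fps set) n) =
    fps_with_coeffs_in (right_ann (set_power (fps_coeff_set J) n))"
proof -
  have prod_list_eq_0_iff: "prod_list fs * g = 0 \<longleftrightarrow>
      (\<forall>as j. list_all2 (\<lambda>a f. a \<in> range (fps_nth f)) as fs \<longrightarrow> prod_list as * fps_nth g j = 0)"
    for fs and g :: "'a fps"
    using ps_Armendariz_prod_list_eq_0_iff[OF assms, of 1] by simp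
  have "g \<in> right_ann (set_power J n) \<longleftrightarrow>
      (\<forall>fs. length fs = n \<and> set fs \<subseteq> J \<longrightarrow> prod_list fs * g = 0)" for g
    by (auto simp: right_ann_def set_power_iff)
  also have "\<dots> g \<longleftrightarrow> (\<forall>fs as j. length fs = n \<and> set fs \<subseteq> J \<and>
      list_all2 (\<lambda>a f. a \<in> range (fps_nth f)) as fs \<longrightarrow> prod_list as * fps_nth g j = 0)" for g
    unfolding prod_list_eq_0_iff by blast
  also have "\<dots> g \<longleftrightarrow> (\<forall>as j. length as = n \<and> set as \<subseteq> fps_coeff_set J \<longrightarrow>
      prod_list as * fps_nth g j = 0)" for g
    by (auto simp: subset_fps_coeff_set_iff) (metis list_all2_lengthD)+
  also have "\<dots> g \<longleftrightarrow> g \<in> fps_with_coeffs_in (right_ann (set_power (fps_coeff_set J) n))" for g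
    by (auto simp: fps_with_coeffs_in_def right_ann_def set_power_def)
  finally show ?thesis by blast
qed

lemma fps_with_coeffs_in_principal:
  fixes e :: "'a::ring_1"
  assumes "e * e = e"
  shows "fps_with_coeffs_in {e * r |r. True} = {fps_const e * g |g. True}"
proof (intro equalityI subsetI)
  fix g assume g: "g \<in> fps_with_coeffs_in {e * r |r. True}"
  have "e * fps_nth g j = fps_nth g j" for j
  proof -
    obtain r where "fps_nth g j = e * r"
      using g by (auto simp: fps_with_coeffs_in_def)
    then show ?thesis
      using assms by (simp add: mult.assoc[symmetric])
  qed
  then have "fps_const e * g = g" by (simp add: fps_eq_iff)
  then show "g \<in> {fps_const e * g |g. True}" by (intro CollectI exI[of _ g]) simp
qed (auto simp: fps_with_coeffs_in_def)

lemma fps_with_coeffs_in_eq_principalD: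
  fixes E :: "'a::ring_1 fps"
  assumes E: "E * E = E" and A: "right_ideal A"
    and eq: "fps_with_coeffs_in A = {E * g |g. True}"
  shows "A = {fps_nth E 0 * r |r. True}"
proof (intro equalityI subsetI)
  fix a assume "a \<in> A"
  then have "fps_const a \<in> fps_with_coeffs_in A"
    using A by (simp add: fps_with_coeffs_in_def right_ideal_def)
  then have "fps_const a \<in> {E * g |g. True}"
    unfolding eq .
  then obtain g where "fps_const a = E * g" by blast
  then have "E * fps_const a = fps_const a"
    using E by (simp add: mult.assoc[symmetric])
  then have "fps_nth (E * fps_const a) 0 = fps_nth (fps_const a) 0"
    by (rule arg_cong)
  then have "fps_nth E 0 * a = a"
    by simp
  then show "a \<in> {fps_nth E 0 * r |r. True}" by (intro CollectI exI[of _ a]) simp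
next
  fix x assume "x \<in> {fps_nth E 0 * r |r. True}"
  moreover have "E \<in> fps_with_coeffs_in A"
    unfolding eq by (auto intro: exI[of _ 1])
  ultimately show "x \<in> A"
    using A by (auto simp: fps_with_coeffs_in_def right_ideal_def)
qed

theorem corollary3p9:
  assumes "ps_Armendariz TYPE('a::ring_1)"
  shows "gen_right_quasi_Baer TYPE('a fps) \<longleftrightarrow> gen_right_quasi_Baer TYPE('a)"
proof
  assume fps_qB: "gen_right_quasi_Baer TYPE('a fps)"
  show "gen_right_quasi_Baer TYPE('a)"
    unfolding gen_right_quasi_Baer_def
  proof (intro allI impI)
    fix I :: "'a set" assume I: "right_ideal I"
    then obtain n E where "n > 0" and E: "E * E = E"
      and ann: "right_ann (set_power (fps_with_coeffs_in I) n) = {E * g |g. True}"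
      using fps_qB right_ideal_fps_with_coeffs_in unfolding gen_right_quasi_Baer_def by blast
    have "fps_coeff_set (fps_with_coeffs_in I) = I"
      using I by (simp add: fps_coeff_set_fps_with_coeffs_in right_ideal_def)
    then have "fps_with_coeffs_in (right_ann (set_power I n)) = {E * g |g. True}"
      using ann right_ann_set_power_fps[OF assms] by simp
    then have "right_ann (set_power I n) = {fps_nth E 0 * r |r. True}"
      by (rule fps_with_coeffs_in_eq_principalD[OF E right_ideal_right_ann])
    moreover have "fps_nth E 0 * fps_nth E 0 = fps_nth E 0"
      using arg_cong[OF E, of "\<lambda>f. fps_nth f 0"] by simp
    ultimately show "\<exists>n>0. \<exists>e. e * e = e \<and> right_ann (set_power I n) = {e * r |r. True}"
      using \<open>n > 0\<close> by blast
  qed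
next
  assume qB: "gen_right_quasi_Baer TYPE('a)"
  show "gen_right_quasi_Baer TYPE('a fps)"
    unfolding gen_right_quasi_Baer_def
  proof (intro allI impI)
    fix J :: "'a fps set" assume "right_ideal J"
    then obtain n e where "n > 0" and e: "e * e = e"
      and ann: "right_ann (set_power (fps_coeff_set J) n) = {e * r |r. True}"
      using qB right_ideal_fps_coeff_set unfolding gen_right_quasi_Baer_def by blast
    have "right_ann (set_power J n) = {fps_const e * g |g. True}"
      unfolding right_ann_set_power_fps[OF assms] ann fps_with_coeffs_in_principal[OF e] ..
    moreover have "fps_const e * fps_const e = fps_const e"
      using \<open>e * e = e\<close> by simp
    ultimately show "\<exists>n>0. \<exists>E. E * E = E \<and> right_ann (set_power J n) = {E * g |g. True}"
      using \<open>n > 0\<close> by blast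
  qed
qed

end
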